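(* Under the hypotheses of the previous setting — $f\in C^2(0,\infty)$ with $f'>0$, $(u,m)$ a classical solution ($u\in C^3$, $m\in C^2$) of $-u_t+\frac12u_x^2=f(m)$, $m_t-(mu_x)_x=0$ in $\mathbb R\times(0,T)$ with $m>0$ and $u_x$ of at most linear growth, $m_0=m(\cdot,0)$, and $\gamma$ the solution of $\gamma_t(x,t)=-u_x(\gamma(x,t),t)$, $\gamma(x,0)=x$ — the function $v(x,t)=f(m(\gamma(x,t),t))$ satisfies $$-\Big(\frac{v_x}{\gamma_x}\Big)_x-\Big(\frac{\gamma_x^2}{m_0f'(m_0/\gamma_x)}v_t\Big)_t=0\qquad\text{in }\mathbb R\times(0,T).$$ In particular, if $f(m)=m^\theta$ ($\theta>0$), then $-\big(\frac{v_x}{\gamma_x}\big)_x-\big(\frac{\gamma_x}{\theta v}v_t\big)_t=0$, equivalently $-v_{tt}-\frac{\theta v}{\gamma_x^2}v_{xx}+v_x\frac{\theta v}{\gamma_x^3}\gamma_{xx}+\frac{\theta+1}{\theta}v^{-1}v_t^2=0$; and if $f(m)=\log m$, then $-\big(\frac{v_x}{\gamma_x}\big)_x-(\gamma_xv_t)_t=0$. *)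

theory Defs
  imports "HOL-Analysis.Analysis"
begin

definition dx :: "(real \<Rightarrow> real \<Rightarrow> real) \<Rightarrow> real \<Rightarrow> real \<Rightarrow> real" where
  "dx g x t = deriv (\<lambda>y. g y t) x"

definition dt :: "(real \<Rightarrow> real \<Rightarrow> real) \<Rightarrow> real \<Rightarrow> real \<Rightarrow> real" where
  "dt g x t = deriv (\<lambda>s. g x s) t"

text \<open>C^k on a set S of the (x,t)-plane: all partial derivatives up to order k exist
  (relative to S, so one-sided at a boundary such as t = 0) and are continuous on S.\<close>

fun Ck :: "nat \<Rightarrow> (real \<Rightarrow> real \<Rightarrow> real) \<Rightarrow> (real \<times> real) set \<Rightarrow> bool" where
  "Ck 0 g S = continuous_on S (\<lambda>(x, t). g x t)"
| "Ck (Suc k) g S = (continuous_on S (\<lambda>(x, t). g x t) \<and>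
     (\<exists>gx gt. (\<forall>(x, t)\<in>S.
          ((\<lambda>y. g y t) has_real_derivative gx x t) (at x within {y. (y, t) \<in> S}) \<and>
          ((\<lambda>s. g x s) has_real_derivative gt x t) (at t within {s. (x, s) \<in> S}))
        \<and> Ck k gx S \<and> Ck k gt S))"

definition C2_on :: "real set \<Rightarrow> (real \<Rightarrow> real) \<Rightarrow> bool" where
  "C2_on A f \<longleftrightarrow> (\<forall>s\<in>A. f differentiable (at s) \<and> deriv f differentiable (at s))
     \<and> continuous_on A (deriv (deriv f))"

definition vfun :: "(real \<Rightarrow> real) \<Rightarrow> (real \<Rightarrow> real \<Rightarrow> real) \<Rightarrow> (real \<Rightarrow> real \<Rightarrow> real)
    \<Rightarrow> real \<Rightarrow> real \<Rightarrow> real" where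
  "vfun f m \<gamma> x t = f (m (\<gamma> x t) t)"

end

theory Submission
  imports Defs
begin

text \<open>
  The continuity equation says that the 1-form \<open>m dx + m u\<^sub>x dt\<close> is closed, so it has a potential
  \<open>P\<close> with \<open>P\<^sub>x = m\<close>, \<open>P\<^sub>t = m u\<^sub>x\<close>. Along a characteristic \<open>\<gamma>\<^sub>t = -u\<^sub>x(\<gamma>, t)\<close> this potential is
  constant, and since \<open>P(\<cdot>, t)\<close> is strictly increasing, \<open>\<gamma>(\<cdot>, t)\<close> is determined implicitly by
  \<open>P(\<gamma>(y, t), t) = P(y, 0)\<close>; hence \<open>\<gamma>\<^sub>x = m\<^sub>0 / m(\<gamma>, t)\<close> (conservation of mass in Lagrangian
  coordinates). With this, \<open>v\<^sub>x / \<gamma>\<^sub>x = \<partial>\<^sub>x f(m)\<close> evaluated at \<open>\<gamma>\<close>, which the Hamilton-Jacobi equation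
  expresses through \<open>u\<close>, while the weighted time derivative of \<open>v\<close> reduces to \<open>\<gamma>\<^sub>x u\<^sub>x\<^sub>x(\<gamma>, t)\<close>.
  Differentiating both and using \<open>u\<^sub>t\<^sub>x\<^sub>x = u\<^sub>x\<^sub>x\<^sub>t\<close> makes the two terms cancel.
\<close>

section \<open>Calculus in two real variables\<close>

lemma has_real_derivative_compose_pair:
  fixes F :: "real \<Rightarrow> real \<Rightarrow> real"
  assumes F: "((\<lambda>z. F (fst z) (snd z)) has_derivative (\<lambda>h. A * fst h + B * snd h)) (at (a s, b s) within X)"
    and a: "(a has_real_derivative a') (at s within J)"
    and b: "(b has_real_derivative b') (at s within J)"
    and into: "\<And>r. r \<in> J \<Longrightarrow> (a r, b r) \<in> X"
  shows "((\<lambda>r. F (a r) (b r)) has_real_derivative A * a' + B * b') (at s within J)"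
proof -
  have ab: "((\<lambda>r. (a r, b r)) has_derivative (\<lambda>h. (a' * h, b' * h))) (at s within J)"
    using has_derivative_Pair[OF a[unfolded has_field_derivative_def] b[unfolded has_field_derivative_def]]
    by simp
  have F': "((\<lambda>z. F (fst z) (snd z)) has_derivative (\<lambda>h. A * fst h + B * snd h))
      (at ((\<lambda>r. (a r, b r)) s) within (\<lambda>r. (a r, b r)) ` J)"
    by (rule has_derivative_subset[OF F]) (use into in auto)
  have "(\<lambda>h. A * fst h + B * snd h) \<circ> (\<lambda>h. (a' * h, b' * h)) = (*) (A * a' + B * b')"
    by (auto simp: algebra_simps)
  with diff_chain_within[OF ab F'] show ?thesis
    unfolding has_field_derivative_def by (simp add: o_def)
qed

lemma has_derivative_of_partials:
  fixes g :: "real \<Rightarrow> real \<Rightarrow> real"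
  assumes gx: "((\<lambda>x. g x y) has_real_derivative A) (at x within X)"
    and gy: "\<And>x y. x \<in> X \<Longrightarrow> y \<in> Y \<Longrightarrow> ((\<lambda>y. g x y) has_real_derivative gy x y) (at y within Y)"
    and gy_cont: "continuous_on (X \<times> Y) (\<lambda>(x, y). gy x y)"
    and "x \<in> X" "y \<in> Y" "convex Y"
  shows "((\<lambda>z. g (fst z) (snd z)) has_derivative (\<lambda>h. A * fst h + gy x y * snd h)) (at (x, y) within X \<times> Y)"
proof -
  have "continuous (at (x, y) within X \<times> Y) (\<lambda>(x, y). gy x y)"
    using gy_cont assms(4,5) by (simp add: continuous_on_eq_continuous_within)
  then have "continuous (at (x, y) within X \<times> Y) (\<lambda>(x, y). blinfun_mult_right (gy x y))"
    using bounded_linear.continuous[OF bounded_linear_blinfun_mult_right]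
    by (simp add: split_beta case_prod_beta')
  then have "((\<lambda>(x, y). g x y) has_derivative (\<lambda>(tx, ty). A * tx + blinfun_mult_right (gy x y) ty))
      (at (x, y) within X \<times> Y)"
    using gx gy assms(4-6)
    by (intro has_derivative_partialsI[where fy = "\<lambda>x y. blinfun_mult_right (gy x y)"])
       (auto simp: has_field_derivative_def has_field_derivative_eq_has_derivative_blinfun continuous_within)
  then show ?thesis by (simp add: split_beta' case_prod_beta)
qed

lemma second_difference_mean_value:
  fixes g gx gxt :: "real \<Rightarrow> real \<Rightarrow> real"
  assumes h: "h > 0"
    and gx: "\<And>x t. x \<in> {x0..x0+h} \<Longrightarrow> t \<in> {t0..t0+h} \<Longrightarrow> ((\<lambda>y. g y t) has_real_derivative gx x t) (at x)"
    and gxt: "\<And>x t. x \<in> {x0..x0+h} \<Longrightarrow> t \<in> {t0..t0+h} \<Longrightarrow> ((\<lambda>s. gx x s) has_real_derivative gxt x t) (at t)"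
  obtains \<xi> \<eta> where "\<xi> \<in> {x0<..<x0+h}" "\<eta> \<in> {t0<..<t0+h}"
    "g (x0+h) (t0+h) - g (x0+h) t0 - g x0 (t0+h) + g x0 t0 = h * h * gxt \<xi> \<eta>"
proof -
  have "((\<lambda>y. g y (t0+h) - g y t0) has_real_derivative gx y (t0+h) - gx y t0) (at y)"
    if "x0 \<le> y" "y \<le> x0 + h" for y
    using that h by (intro DERIV_diff gx) auto
  then obtain \<xi> where \<xi>: "x0 < \<xi>" "\<xi> < x0 + h"
    "g (x0+h) (t0+h) - g (x0+h) t0 - (g x0 (t0+h) - g x0 t0) = h * (gx \<xi> (t0+h) - gx \<xi> t0)"
    using MVT2[of x0 "x0+h" "\<lambda>y. g y (t0+h) - g y t0" "\<lambda>y. gx y (t0+h) - gx y t0"] h by auto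
  have "(gx \<xi> has_real_derivative gxt \<xi> s) (at s)" if "t0 \<le> s" "s \<le> t0 + h" for s
    using that \<xi> by (intro gxt) auto
  then obtain \<eta> where \<eta>: "t0 < \<eta>" "\<eta> < t0 + h" "gx \<xi> (t0+h) - gx \<xi> t0 = h * gxt \<xi> \<eta>"
    using MVT2[of t0 "t0+h" "gx \<xi>" "gxt \<xi>"] h by auto
  from \<xi> \<eta> show ?thesis by (intro that[of \<xi> \<eta>]) (auto simp: algebra_simps)
qed

lemma eventually_nhds_square:
  fixes x0 t0 :: real
  assumes "\<forall>\<^sub>F p in nhds (x0, t0). P p"
  obtains h where "h > 0" "\<And>x t. x \<in> {x0..x0+h} \<Longrightarrow> t \<in> {t0..t0+h} \<Longrightarrow> P (x, t)"
proof -
  obtain d where d: "d > 0" and P: "\<And>p. dist p (x0, t0) < d \<Longrightarrow> P p"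
    using assms unfolding eventually_nhds_metric by blast
  have "P (x, t)" if "x \<in> {x0..x0 + d/3}" "t \<in> {t0..t0 + d/3}" for x t
  proof (rule P)
    have "dist (x, t) (x0, t0) \<le> norm (x - x0) + norm (t - t0)"
      using norm_Pair_le[of "x - x0" "t - t0"] by (simp add: dist_norm)
    also have "\<dots> < d" using that d by simp
    finally show "dist (x, t) (x0, t0) < d" .
  qed
  with d show ?thesis by (intro that[of "d/3"]) auto
qed

lemma mixed_partials_eq:
  fixes g gx gt gxt gtx :: "real \<Rightarrow> real \<Rightarrow> real"
  assumes U: "open U" "(x0, t0) \<in> U"
    and gx: "\<And>x t. (x, t) \<in> U \<Longrightarrow> ((\<lambda>y. g y t) has_real_derivative gx x t) (at x)"
    and gt: "\<And>x t. (x, t) \<in> U \<Longrightarrow> ((\<lambda>s. g x s) has_real_derivative gt x t) (at t)"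
    and gxt: "\<And>x t. (x, t) \<in> U \<Longrightarrow> ((\<lambda>s. gx x s) has_real_derivative gxt x t) (at t)"
    and gtx: "\<And>x t. (x, t) \<in> U \<Longrightarrow> ((\<lambda>y. gt y t) has_real_derivative gtx x t) (at x)"
    and cont: "continuous_on U (\<lambda>(x, t). gxt x t)" "continuous_on U (\<lambda>(x, t). gtx x t)"
  shows "gxt x0 t0 = gtx x0 t0"
proof (rule ccontr)
  assume "gxt x0 t0 \<noteq> gtx x0 t0"
  then have e: "\<bar>gxt x0 t0 - gtx x0 t0\<bar> / 2 > 0" (is "?e > 0") by simp
  have "((\<lambda>(x, t). gxt x t) \<longlongrightarrow> (\<lambda>(x, t). gxt x t) (x0, t0)) (nhds (x0, t0))"
       "((\<lambda>(x, t). gtx x t) \<longlongrightarrow> (\<lambda>(x, t). gtx x t) (x0, t0)) (nhds (x0, t0))"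
    using cont U continuous_on_eq_continuous_at tendsto_at_iff_tendsto_nhds isCont_def by blast+
  from tendstoD[OF this(1) e] tendstoD[OF this(2) e] eventually_nhds_in_open[OF U]
  have "\<forall>\<^sub>F p in nhds (x0, t0). p \<in> U \<and> \<bar>gxt (fst p) (snd p) - gxt x0 t0\<bar> < ?e
      \<and> \<bar>gtx (fst p) (snd p) - gtx x0 t0\<bar> < ?e"
    by (auto intro: eventually_conj simp: dist_real_def split_beta)
  then obtain h where h: "h > 0" and box: "\<And>x t. x \<in> {x0..x0+h} \<Longrightarrow> t \<in> {t0..t0+h} \<Longrightarrow>
      (x, t) \<in> U \<and> \<bar>gxt x t - gxt x0 t0\<bar> < ?e \<and> \<bar>gtx x t - gtx x0 t0\<bar> < ?e"
    by (rule eventually_nhds_square) auto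
  obtain \<xi> \<eta> where \<xi>\<eta>: "\<xi> \<in> {x0<..<x0+h}" "\<eta> \<in> {t0<..<t0+h}"
      "g (x0+h) (t0+h) - g (x0+h) t0 - g x0 (t0+h) + g x0 t0 = h * h * gxt \<xi> \<eta>"
    by (rule second_difference_mean_value[OF h, of x0 t0 g gx gxt]) (auto intro!: gx gxt box[THEN conjunct1])
  obtain \<eta>' \<xi>' where \<xi>\<eta>': "\<eta>' \<in> {t0<..<t0+h}" "\<xi>' \<in> {x0<..<x0+h}"
      "g (x0+h) (t0+h) - g x0 (t0+h) - g (x0+h) t0 + g x0 t0 = h * h * gtx \<xi>' \<eta>'"
    by (rule second_difference_mean_value[OF h, of t0 x0 "\<lambda>t x. g x t" "\<lambda>t x. gt x t" "\<lambda>t x. gtx x t"])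
       (auto intro!: gt gtx box[THEN conjunct1])
  have "h * h * gxt \<xi> \<eta> = h * h * gtx \<xi>' \<eta>'" using \<xi>\<eta>(3) \<xi>\<eta>'(3) by linarith
  then have "gxt \<xi> \<eta> = gtx \<xi>' \<eta>'" using h by simp
  then have "\<bar>gxt x0 t0 - gtx x0 t0\<bar> \<le> \<bar>gxt \<xi> \<eta> - gxt x0 t0\<bar> + \<bar>gtx \<xi>' \<eta>' - gtx x0 t0\<bar>"
    by linarith
  moreover have "\<bar>gxt \<xi> \<eta> - gxt x0 t0\<bar> < ?e" "\<bar>gtx \<xi>' \<eta>' - gtx x0 t0\<bar> < ?e"
    using box \<xi>\<eta> \<xi>\<eta>' by auto
  ultimately show False by (simp add: field_simps)
qed

definition signed_integral :: "real \<Rightarrow> real \<Rightarrow> (real \<Rightarrow> real) \<Rightarrow> real" where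
  "signed_integral a b h = (if a \<le> b then integral {a..b} h else - integral {b..a} h)"

lemma signed_integral_eq_diff:
  assumes h: "continuous_on UNIV h" and "c \<le> a" "c \<le> b"
  shows "signed_integral a b h = integral {c..b} h - integral {c..a} h"
proof -
  have combine: "integral {c..p} h + integral {p..q} h = integral {c..q} h" if "c \<le> p" "p \<le> q" for p q
    by (rule Henstock_Kurzweil_Integration.integral_combine)
       (use that in \<open>auto intro: integrable_continuous_interval continuous_on_subset[OF h]\<close>)
  show ?thesis
    using combine[of a b] combine[of b a] assms by (auto simp: signed_integral_def)
qed

lemma has_real_derivative_signed_integral:
  assumes h: "continuous_on UNIV h"
  shows "((\<lambda>y. signed_integral a y h) has_real_derivative h y) (at y)"
proof -
  define c where "c = min a y - 1"
  have "((\<lambda>z. integral {c..z} h) has_real_derivative h y) (at y within {c..y+1})"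
    by (rule integral_has_real_derivative) (auto simp: c_def intro: continuous_on_subset[OF h])
  moreover have "at y within {c..y+1} = at y"
    by (rule at_within_interior) (auto simp: c_def)
  ultimately have "((\<lambda>z. integral {c..z} h - integral {c..a} h) has_real_derivative h y) (at y)"
    by (auto intro!: derivative_eq_intros)
  then show ?thesis
    by (rule has_field_derivative_transform_within_open[of _ _ _ "{c<..}"])
       (auto simp: c_def intro!: signed_integral_eq_diff[OF h, symmetric])
qed

lemma signed_integral_FTC:
  assumes G: "\<And>z. (G has_real_derivative g z) (at z)"
  shows "signed_integral a b g = G b - G a"
proof -
  have "integral {p..q} g = G q - G p" if "p \<le> q" for p q
    using that G
    by (intro integral_unique fundamental_theorem_of_calculus)
       (auto simp: has_real_derivative_iff_has_vector_derivative[symmetric] intro: has_field_derivative_at_within)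
  then show ?thesis by (simp add: signed_integral_def)
qed

lemma has_real_derivative_signed_integral_param:
  fixes h hs :: "real \<Rightarrow> real \<Rightarrow> real"
  assumes hs: "\<And>s z. s \<in> U \<Longrightarrow> ((\<lambda>s. h s z) has_real_derivative hs s z) (at s within U)"
    and hs_cont: "continuous_on (U \<times> UNIV) (\<lambda>(s, z). hs s z)"
    and h_cont: "\<And>s. s \<in> U \<Longrightarrow> continuous_on UNIV (h s)"
    and "s0 \<in> U" "convex U"
  shows "((\<lambda>s. signed_integral a b (h s)) has_real_derivative signed_integral a b (hs s0)) (at s0 within U)"
proof -
  have "((\<lambda>s. integral (cbox p q) (h s)) has_real_derivative integral (cbox p q) (hs s0)) (at s0 within U)" for p q
    using assms
    by (intro leibniz_rule_field_derivative)
       (auto intro: continuous_on_subset[OF hs_cont] integrable_continuous_interval continuous_on_subset[OF h_cont])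
  then show ?thesis
    by (cases "a \<le> b") (auto simp: signed_integral_def cbox_interval intro!: derivative_eq_intros)
qed

lemma DERIV_zero_off_finite_constant:
  fixes \<phi> :: "real \<Rightarrow> real"
  assumes "convex S" "finite K" "c \<in> S" "x \<in> S"
    and \<phi>: "\<And>r. r \<in> S \<Longrightarrow> (\<phi> has_real_derivative \<phi>' r) (at r within S)"
    and zero: "\<And>r. r \<in> S - K \<Longrightarrow> \<phi>' r = 0"
  shows "\<phi> x = \<phi> c"
proof (rule has_derivative_zero_unique_strong_convex[OF assms(1,2) _ assms(3) refl _ assms(4)])
  show "continuous_on S \<phi>"
    using \<phi> DERIV_continuous continuous_on_eq_continuous_within by blast
  show "(\<phi> has_derivative (\<lambda>h. 0)) (at r within S)" if "r \<in> S - K" for r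
    using \<phi>[of r] zero[OF that] that by (simp add: has_field_derivative_def lambda_zero)
qed

lemma continuous_on_Times_slice:
  fixes g :: "'a::topological_space \<Rightarrow> 'b::topological_space \<Rightarrow> 'c::topological_space"
  assumes g: "continuous_on (A \<times> B) (\<lambda>(x, t). g x t)"
  shows "t \<in> B \<Longrightarrow> continuous_on A (\<lambda>x. g x t)"
    and "x \<in> A \<Longrightarrow> continuous_on B (\<lambda>t. g x t)"
proof -
  show "continuous_on A (\<lambda>x. g x t)" if "t \<in> B"
    using continuous_on_compose2[OF g continuous_on_Pair[OF continuous_on_id continuous_on_const]] that
    by auto
  show "continuous_on B (\<lambda>t. g x t)" if "x \<in> A"
    using continuous_on_compose2[OF g continuous_on_Pair[OF continuous_on_const continuous_on_id]] that
    by auto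
qed

lemma integral_has_real_derivative_atLeastLessThan:
  assumes k: "continuous_on {a..<b} k" and s: "s \<in> {a..<b}"
  shows "((\<lambda>s. integral {a..s} k) has_real_derivative k s) (at s within {a..<b})"
proof -
  define c where "c = (s + b) / 2"
  have c: "s < c" "c < b" using s by (auto simp: c_def)
  have "((\<lambda>s. integral {a..s} k) has_real_derivative k s) (at s within {a..c})"
    by (rule integral_has_real_derivative) (use k c s in \<open>auto intro: continuous_on_subset\<close>)
  moreover have "at s within {a..c} = at s within {a..<b}"
    by (rule at_within_nhd[of _ "{..<c}"]) (use c in auto)
  ultimately show ?thesis by simp
qed

lemma has_real_derivative_implicit:
  fixes \<phi> \<psi> \<gamma> :: "real \<Rightarrow> real"
  assumes \<phi>: "\<And>y. (\<phi> has_real_derivative \<phi>' y) (at y)" "\<And>y. \<phi>' y > 0"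
    and \<psi>: "(\<psi> has_real_derivative \<psi>') (at x)"
    and level: "\<And>y. \<phi> (\<gamma> y) = \<psi> y"
  shows "(\<gamma> has_real_derivative \<psi>' / \<phi>' (\<gamma> x)) (at x)"
proof -
  have mono: "strict_mono \<phi>"
    using DERIV_pos_imp_increasing \<phi> by (metis strict_monoI)
  then have "inj \<phi>" using strict_mono_on_imp_inj_on by blast
  define g where "g = inv \<phi>"
  have g\<phi>: "g (\<phi> z) = z" for z using \<open>inj \<phi>\<close> by (simp add: g_def)
  have \<gamma>: "\<gamma> = g \<circ> \<psi>" using g\<phi> level by (metis comp_apply ext)
  have "isCont g (\<psi> x)"
    using isCont_inverse_function[of 1 "\<gamma> x" g \<phi>] g\<phi> DERIV_isCont[OF \<phi>(1)] level by simp
  moreover have "\<phi> (g y) = y" if y: "\<phi> (\<gamma> x - 1) < y" "y < \<phi> (\<gamma> x + 1)" for y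
  proof -
    have "continuous_on {\<gamma> x - 1..\<gamma> x + 1} \<phi>"
      using \<phi>(1) by (meson DERIV_isCont continuous_at_imp_continuous_on)
    then obtain z where "\<phi> z = y"
      using IVT'[of \<phi> "\<gamma> x - 1" y "\<gamma> x + 1"] y by force
    then show ?thesis using g\<phi> by metis
  qed
  moreover have "\<phi> (\<gamma> x - 1) < \<psi> x" "\<psi> x < \<phi> (\<gamma> x + 1)"
    using strict_monoD[OF mono, of "\<gamma> x - 1" "\<gamma> x"] strict_monoD[OF mono, of "\<gamma> x" "\<gamma> x + 1"] level[of x]
    by auto
  moreover have "\<phi>' (\<gamma> x) \<noteq> 0" using \<phi>(2) by (metis less_irrefl)
  ultimately have "(g has_real_derivative inverse (\<phi>' (\<gamma> x))) (at (\<psi> x))"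
    using \<phi> g\<phi> level[of x, symmetric]
    by (intro DERIV_inverse_function[where f = \<phi>]) auto
  from DERIV_chain[OF this \<psi>] show ?thesis by (simp add: \<gamma> field_simps)
qed

section \<open>Continuously differentiable functions on a strip\<close>

definition C1_strip :: "real \<Rightarrow> (real \<Rightarrow> real \<Rightarrow> real) \<Rightarrow> (real \<Rightarrow> real \<Rightarrow> real) \<Rightarrow> (real \<Rightarrow> real \<Rightarrow> real) \<Rightarrow> bool"
  where "C1_strip T g gx gt \<longleftrightarrow>
    continuous_on (UNIV \<times> {0..<T}) (\<lambda>(x, t). g x t) \<and>
    continuous_on (UNIV \<times> {0..<T}) (\<lambda>(x, t). gx x t) \<and>
    continuous_on (UNIV \<times> {0..<T}) (\<lambda>(x, t). gt x t) \<and>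
    (\<forall>x. \<forall>t\<in>{0..<T}. ((\<lambda>y. g y t) has_real_derivative gx x t) (at x) \<and>
       ((\<lambda>s. g x s) has_real_derivative gt x t) (at t within {0..<T}))"

lemma Ck_Suc_strip:
  assumes "Ck (Suc k) g (UNIV \<times> {0..<T})"
  obtains gx gt where "C1_strip T g gx gt" "Ck k gx (UNIV \<times> {0..<T})" "Ck k gt (UNIV \<times> {0..<T})"
proof -
  have Ck_cont: "continuous_on S (\<lambda>(x, t). h x t)" if "Ck j h S" for j h S
    using that by (cases j) auto
  have slices: "{s. (x, s) \<in> UNIV \<times> {0..<T}} = {0..<T}" "{y. (y, t) \<in> UNIV \<times> {0..<T}} = UNIV"
    if "t \<in> {0..<T}" for x t :: real
    using that by auto
  from assms obtain gx gt where
    "continuous_on (UNIV \<times> {0..<T}) (\<lambda>(x, t). g x t)"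
    "\<forall>(x, t)\<in>UNIV \<times> {0..<T}.
       ((\<lambda>y. g y t) has_real_derivative gx x t) (at x within {y. (y, t) \<in> UNIV \<times> {0..<T}}) \<and>
       ((\<lambda>s. g x s) has_real_derivative gt x t) (at t within {s. (x, s) \<in> UNIV \<times> {0..<T}})"
    and k: "Ck k gx (UNIV \<times> {0..<T})" "Ck k gt (UNIV \<times> {0..<T})"
    by auto
  with Ck_cont[OF k(1)] Ck_cont[OF k(2)] have "C1_strip T g gx gt"
    unfolding C1_strip_def by (auto simp: slices simp del: atLeastLessThan_iff)
  with k show ?thesis by (intro that)
qed

context
  fixes T :: real and g gx gt :: "real \<Rightarrow> real \<Rightarrow> real"
  assumes C1: "C1_strip T g gx gt"
begin

lemma C1_strip_cont:
  "continuous_on (UNIV \<times> {0..<T}) (\<lambda>(x, t). g x t)"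
  "continuous_on (UNIV \<times> {0..<T}) (\<lambda>(x, t). gx x t)"
  "continuous_on (UNIV \<times> {0..<T}) (\<lambda>(x, t). gt x t)"
  using C1 by (simp_all add: C1_strip_def)

lemma C1_strip_x: "t \<in> {0..<T} \<Longrightarrow> ((\<lambda>y. g y t) has_real_derivative gx x t) (at x)"
  using C1 by (simp add: C1_strip_def)

lemma C1_strip_t_within: "t \<in> {0..<T} \<Longrightarrow> ((\<lambda>s. g x s) has_real_derivative gt x t) (at t within {0..<T})"
  using C1 by (simp add: C1_strip_def)

lemma C1_strip_t: "t \<in> {0<..<T} \<Longrightarrow> ((\<lambda>s. g x s) has_real_derivative gt x t) (at t)"
  using C1_strip_t_within[of t x] at_within_interior[of t "{0..<T}"]
  by (simp add: interior_atLeastLessThan)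

lemma C1_strip_dx: "t \<in> {0..<T} \<Longrightarrow> dx g x t = gx x t"
  unfolding dx_def by (rule DERIV_imp_deriv) (rule C1_strip_x)

lemma C1_strip_dt: "t \<in> {0<..<T} \<Longrightarrow> dt g x t = gt x t"
  unfolding dt_def by (rule DERIV_imp_deriv) (rule C1_strip_t)

lemma C1_strip_along_curve:
  assumes s: "s \<in> {0..<T}" and c: "(c has_real_derivative c') (at s within {0..<T})"
  shows "((\<lambda>r. g (c r) r) has_real_derivative gx (c s) s * c' + gt (c s) s) (at s within {0..<T})"
proof -
  have "((\<lambda>z. g (fst z) (snd z)) has_derivative (\<lambda>h. gx (c s) s * fst h + gt (c s) s * snd h))
      (at (c s, s) within UNIV \<times> {0..<T})"
    using s by (intro has_derivative_of_partials) (auto intro: C1_strip_x C1_strip_t_within C1_strip_cont)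
  from has_real_derivative_compose_pair[OF this c DERIV_ident] show ?thesis by simp
qed

end

section \<open>The mean field game system along characteristics\<close>

locale mfg_system =
  fixes f :: "real \<Rightarrow> real" and u m \<gamma> :: "real \<Rightarrow> real \<Rightarrow> real" and T :: real
    and ux ut uxx uxt utx utt uxxx uxxt uxtx uxtt utxx utxt mx mt :: "real \<Rightarrow> real \<Rightarrow> real"
  assumes f_C2: "C2_on {0<..} f"
    and f'_pos: "\<forall>s>0. deriv f s > 0"
    and HJ: "\<forall>x. \<forall>t\<in>{0<..<T}. - dt u x t + (dx u x t)\<^sup>2 / 2 = f (m x t)"
    and FP: "\<forall>x. \<forall>t\<in>{0<..<T}. dt m x t - dx (\<lambda>y s. m y s * dx u y s) x t = 0"
    and m_pos: "\<forall>x. \<forall>t\<in>{0<..<T}. m x t > 0"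
    and gamma_0: "\<forall>x. \<gamma> x 0 = x"
    and gamma_ode: "\<forall>x. \<forall>t\<in>{0..<T}.
          ((\<lambda>s. \<gamma> x s) has_real_derivative (- dx u (\<gamma> x t) t)) (at t within {0..<T})"
    and u: "C1_strip T u ux ut" and ux: "C1_strip T ux uxx uxt" and ut: "C1_strip T ut utx utt"
    and uxx: "C1_strip T uxx uxxx uxxt" and uxt: "C1_strip T uxt uxtx uxtt" and utx: "C1_strip T utx utxx utxt"
    and m: "C1_strip T m mx mt"
begin

lemma f_has_derivative: "s > 0 \<Longrightarrow> (f has_real_derivative deriv f s) (at s)"
  using f_C2 by (auto simp: C2_on_def DERIV_deriv_iff_real_differentiable)

lemma gamma_has_derivative_t:
  "t \<in> {0..<T} \<Longrightarrow> ((\<lambda>s. \<gamma> x s) has_real_derivative - ux (\<gamma> x t) t) (at t within {0..<T})"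
  using gamma_ode C1_strip_dx[OF u] by auto

lemma continuous_on_characteristic: "continuous_on {0..<T} (\<lambda>r. (\<gamma> x r, r))"
  unfolding continuous_on_eq_continuous_within
  using DERIV_continuous[OF gamma_has_derivative_t] by (auto intro: continuous_intros)

text \<open>\<open>fm_x\<close> is \<open>\<partial>\<^sub>x f(m)\<close>, computed through the Hamilton-Jacobi equation \<open>f(m) = -u\<^sub>t + u\<^sub>x\<^sup>2/2\<close>.\<close>

definition fm_x :: "real \<Rightarrow> real \<Rightarrow> real"
  where "fm_x z t = - utx z t + ux z t * uxx z t"

definition fm_xx :: "real \<Rightarrow> real \<Rightarrow> real"
  where "fm_xx z t = - utxx z t + (uxx z t)\<^sup>2 + ux z t * uxxx z t"

lemma fm_x_has_derivative: "t \<in> {0..<T} \<Longrightarrow> ((\<lambda>z. fm_x z t) has_real_derivative fm_xx z t) (at z)"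
  unfolding fm_x_def fm_xx_def
  using C1_strip_x[OF utx] C1_strip_x[OF ux] C1_strip_x[OF uxx]
  by (auto intro!: derivative_eq_intros simp: power2_eq_square)

lemma deriv_f_m_mult_mx:
  assumes t: "t \<in> {0<..<T}"
  shows "deriv f (m z t) * mx z t = fm_x z t"
proof -
  have t': "t \<in> {0..<T}" using t by auto
  have "f (m y t) = - ut y t + (ux y t)\<^sup>2 / 2" for y
  proof -
    have "- dt u y t + (dx u y t)\<^sup>2 / 2 = f (m y t)" using HJ t by blast
    then show ?thesis using C1_strip_dt[OF u t] C1_strip_dx[OF u t'] by simp
  qed
  then have "(\<lambda>y. f (m y t)) = (\<lambda>y. - ut y t + (ux y t)\<^sup>2 / 2)" by auto
  moreover have "((\<lambda>y. f (m y t)) has_real_derivative deriv f (m z t) * mx z t) (at z)"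
    by (rule DERIV_chain2[OF f_has_derivative C1_strip_x[OF m t']]) (use m_pos t in auto)
  moreover have "((\<lambda>y. - ut y t + (ux y t)\<^sup>2 / 2) has_real_derivative fm_x z t) (at z)"
    unfolding fm_x_def using C1_strip_x[OF ut t'] C1_strip_x[OF ux t'] C1_strip_x[OF u t', of z]
    by (auto intro!: derivative_eq_intros)
  ultimately show ?thesis using DERIV_unique by metis
qed

lemma mt_eq:
  assumes t: "t \<in> {0<..<T}"
  shows "mt z t = mx z t * ux z t + m z t * uxx z t"
proof -
  have t': "t \<in> {0..<T}" using t by auto
  have "(\<lambda>y. m y t * dx u y t) = (\<lambda>y. m y t * ux y t)"
    using C1_strip_dx[OF u t'] by auto
  then have "dx (\<lambda>y s. m y s * dx u y s) z t = deriv (\<lambda>y. m y t * ux y t) z"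
    by (simp add: dx_def)
  also have "\<dots> = mx z t * ux z t + m z t * uxx z t"
    by (rule DERIV_imp_deriv) (use C1_strip_x[OF m t'] C1_strip_x[OF ux t'] in \<open>auto intro!: derivative_eq_intros\<close>)
  finally show ?thesis using FP t C1_strip_dt[OF m t] by auto
qed

lemma utxx_eq_uxxt:
  assumes t: "t \<in> {0<..<T}"
  shows "utxx z t = uxxt z t"
proof -
  have U: "open (UNIV \<times> {0<..<T})" by (intro open_Times) auto
  have "uxt y s = utx y s" if "s \<in> {0<..<T}" for y s
    by (rule mixed_partials_eq[OF U, of y s u ux ut])
       (use that in \<open>auto intro: C1_strip_x[OF u] C1_strip_t[OF u] C1_strip_t[OF ux] C1_strip_x[OF ut]
          continuous_on_subset[OF C1_strip_cont(3)[OF ux]] continuous_on_subset[OF C1_strip_cont(2)[OF ut]]\<close>)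
  then have "(\<lambda>y. utx y t) = (\<lambda>y. uxt y t)" using t by auto
  then have "utxx z t = uxtx z t"
    using t C1_strip_x[OF uxt, of t z] C1_strip_x[OF utx, of t z] DERIV_unique by fastforce
  also have "\<dots> = uxxt z t"
    by (rule mixed_partials_eq[OF U, of z t ux uxx uxt, symmetric])
       (use t in \<open>auto intro: C1_strip_x[OF ux] C1_strip_t[OF ux] C1_strip_t[OF uxx] C1_strip_x[OF uxt]
          continuous_on_subset[OF C1_strip_cont(3)[OF uxx]] continuous_on_subset[OF C1_strip_cont(2)[OF uxt]]\<close>)
  finally show ?thesis .
qed

text \<open>\<open>mass_potential_t\<close> is the time derivative of the potential before the continuity equation turns
  it into \<open>m u\<^sub>x\<close>; unlike that equation it is available at \<open>t = 0\<close> as well.\<close>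

definition mass_potential :: "real \<Rightarrow> real \<Rightarrow> real"
  where "mass_potential y t = signed_integral 0 y (\<lambda>z. m z t) + integral {0..t} (\<lambda>s. m 0 s * ux 0 s)"

definition mass_potential_t :: "real \<Rightarrow> real \<Rightarrow> real"
  where "mass_potential_t y t = signed_integral 0 y (\<lambda>z. mt z t) + m 0 t * ux 0 t"

lemma mass_potential_has_derivative_x:
  "t \<in> {0..<T} \<Longrightarrow> ((\<lambda>y. mass_potential y t) has_real_derivative m y t) (at y)"
  unfolding mass_potential_def
  using has_real_derivative_signed_integral[OF continuous_on_Times_slice(1)[OF C1_strip_cont(1)[OF m]]]
  by (auto intro!: derivative_eq_intros)

lemma mass_potential_has_derivative_t:
  assumes t: "t \<in> {0..<T}"
  shows "((\<lambda>s. mass_potential y s) has_real_derivative mass_potential_t y t) (at t within {0..<T})"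
proof -
  have "((\<lambda>s. signed_integral 0 y (\<lambda>z. m z s)) has_real_derivative signed_integral 0 y (\<lambda>z. mt z t))
      (at t within {0..<T})"
    using t continuous_on_swap_args[OF C1_strip_cont(3)[OF m]]
    by (intro has_real_derivative_signed_integral_param[where h = "\<lambda>s z. m z s"])
       (auto intro: C1_strip_t_within[OF m] continuous_on_Times_slice(1)[OF C1_strip_cont(1)[OF m]])
  moreover have "continuous_on {0..<T} (\<lambda>s. m 0 s * ux 0 s)"
    using continuous_on_Times_slice(2)[OF C1_strip_cont(1)[OF m]]
      continuous_on_Times_slice(2)[OF C1_strip_cont(1)[OF ux]]
    by (intro continuous_on_mult) auto
  ultimately show ?thesis
    unfolding mass_potential_def mass_potential_t_def
    using t by (intro DERIV_add integral_has_real_derivative_atLeastLessThan)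
qed

lemma mass_potential_t_eq:
  assumes t: "t \<in> {0<..<T}"
  shows "mass_potential_t y t = m y t * ux y t"
proof -
  have "((\<lambda>z. m z t * ux z t) has_real_derivative mt z t) (at z)" for z
    using t C1_strip_x[OF m, of t] C1_strip_x[OF ux, of t] mt_eq[OF t]
    by (auto simp: algebra_simps intro!: derivative_eq_intros)
  from signed_integral_FTC[OF this] show ?thesis by (simp add: mass_potential_t_def)
qed

lemma mass_potential_along_characteristic:
  assumes s: "s \<in> {0..<T}"
  shows "((\<lambda>r. mass_potential (\<gamma> x r) r) has_real_derivative
      mass_potential_t (\<gamma> x s) s - m (\<gamma> x s) s * ux (\<gamma> x s) s) (at s within {0..<T})"
proof -
  have "((\<lambda>z. mass_potential (snd z) (fst z)) has_derivative
      (\<lambda>h. mass_potential_t (\<gamma> x s) s * fst h + m (\<gamma> x s) s * snd h)) (at (s, \<gamma> x s) within {0..<T} \<times> UNIV)"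
    using s continuous_on_swap_args[OF C1_strip_cont(1)[OF m]]
    by (intro has_derivative_of_partials[where g = "\<lambda>a b. mass_potential b a" and gy = "\<lambda>a b. m b a", simplified])
       (auto intro: mass_potential_has_derivative_t mass_potential_has_derivative_x)
  from has_real_derivative_compose_pair[OF this DERIV_ident gamma_has_derivative_t[OF s]]
  show ?thesis by simp
qed

lemma mass_potential_characteristic_eq:
  assumes t: "t \<in> {0..<T}"
  shows "mass_potential (\<gamma> x t) t = mass_potential x 0"
  using DERIV_zero_off_finite_constant[of "{0..<T}" "{0}" 0 t, OF _ _ _ t mass_potential_along_characteristic]
    t mass_potential_t_eq gamma_0 by auto

definition gamma_x :: "real \<Rightarrow> real \<Rightarrow> real"
  where "gamma_x y t = m y 0 / m (\<gamma> y t) t"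

lemma gamma_has_derivative_x:
  assumes t: "t \<in> {0<..<T}"
  shows "((\<lambda>y. \<gamma> y t) has_real_derivative gamma_x x t) (at x)"
proof -
  have "t \<in> {0..<T}" "(0::real) \<in> {0..<T}" using t by auto
  from has_real_derivative_implicit[OF mass_potential_has_derivative_x[OF this(1)] _
      mass_potential_has_derivative_x[OF this(2)] mass_potential_characteristic_eq[OF this(1)]]
  show ?thesis unfolding gamma_x_def using t m_pos by auto
qed

lemma dx_gamma: "t \<in> {0<..<T} \<Longrightarrow> dx \<gamma> y t = gamma_x y t"
  unfolding dx_def by (rule DERIV_imp_deriv[OF gamma_has_derivative_x])

lemma m_along_characteristic_within:
  "s \<in> {0..<T} \<Longrightarrow> ((\<lambda>r. m (\<gamma> x r) r) has_real_derivative
     mx (\<gamma> x s) s * (- ux (\<gamma> x s) s) + mt (\<gamma> x s) s) (at s within {0..<T})"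
  by (rule C1_strip_along_curve[OF m _ gamma_has_derivative_t])

lemma m_along_characteristic:
  assumes s: "s \<in> {0<..<T}"
  shows "((\<lambda>r. m (\<gamma> x r) r) has_real_derivative m (\<gamma> x s) s * uxx (\<gamma> x s) s) (at s)"
  using m_along_characteristic_within[of s x] at_within_interior[of s "{0..<T}"] mt_eq[OF s, of "\<gamma> x s"] s
  by (auto simp: interior_atLeastLessThan algebra_simps)

lemma m_initial_pos:
  assumes t: "t \<in> {0<..<T}"
  shows "m x 0 > 0"
proof -
  define k where "k r = uxx (\<gamma> x r) r" for r
  have "continuous_on {0..<T} k"
    unfolding k_def using continuous_on_compose2[OF C1_strip_cont(1)[OF uxx] continuous_on_characteristic]
    by auto
  then have K: "((\<lambda>s. integral {0..s} k) has_real_derivative k s) (at s within {0..<T})" if "s \<in> {0..<T}" for s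
    using that by (rule integral_has_real_derivative_atLeastLessThan)
  define w where "w r = m (\<gamma> x r) r * exp (- integral {0..r} k)" for r
  define w' where "w' r = (mx (\<gamma> x r) r * (- ux (\<gamma> x r) r) + mt (\<gamma> x r) r - m (\<gamma> x r) r * k r)
      * exp (- integral {0..r} k)" for r
  \<comment> \<open>\<open>m_pos\<close> says nothing at \<open>t = 0\<close>; but \<open>m\<close> along a characteristic solves \<open>w' = u\<^sub>x\<^sub>x w\<close>,
    so the integrating factor makes \<open>w\<close> constant.\<close>
  have "w t = w 0"
  proof (rule DERIV_zero_off_finite_constant[of "{0..<T}" "{0}" 0 t w w'])
    show "(w has_real_derivative w' r) (at r within {0..<T})" if "r \<in> {0..<T}" for r
      using DERIV_mult[OF m_along_characteristic_within DERIV_chain2[OF DERIV_exp DERIV_minus[OF K]], OF that that]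
      unfolding w_def w'_def by (simp add: algebra_simps)
    show "w' r = 0" if "r \<in> {0..<T} - {0}" for r
      using that mt_eq[of r "\<gamma> x r"] by (simp add: w'_def k_def algebra_simps)
  qed (use t in auto)
  moreover have "w 0 = m x 0" by (simp add: w_def gamma_0)
  moreover have "w t > 0" using m_pos t by (simp add: w_def)
  ultimately show ?thesis by simp
qed

lemma gamma_x_pos: "t \<in> {0<..<T} \<Longrightarrow> gamma_x y t > 0"
  unfolding gamma_x_def using m_initial_pos m_pos by auto

lemma v_has_derivative_x:
  assumes t: "t \<in> {0<..<T}"
  shows "((\<lambda>y. vfun f m \<gamma> y t) has_real_derivative fm_x (\<gamma> y t) t * gamma_x y t) (at y)"
proof -
  have t': "t \<in> {0..<T}" using t by auto
  have "((\<lambda>y. f (m (\<gamma> y t) t)) has_real_derivative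
      deriv f (m (\<gamma> y t) t) * (mx (\<gamma> y t) t * gamma_x y t)) (at y)"
    using m_pos t
    by (intro DERIV_chain2[OF f_has_derivative] DERIV_chain2[OF C1_strip_x[OF m t'] gamma_has_derivative_x[OF t]])
       auto
  then show ?thesis
    unfolding vfun_def using deriv_f_m_mult_mx[OF t] by (simp add: mult.assoc[symmetric])
qed

lemma dx_v: "t \<in> {0<..<T} \<Longrightarrow> dx (vfun f m \<gamma>) y t = fm_x (\<gamma> y t) t * gamma_x y t"
  unfolding dx_def by (rule DERIV_imp_deriv[OF v_has_derivative_x])

lemma dx_v_div_dx_gamma: "t \<in> {0<..<T} \<Longrightarrow> dx (vfun f m \<gamma>) y t / dx \<gamma> y t = fm_x (\<gamma> y t) t"
  using dx_v dx_gamma gamma_x_pos[of t y] by simp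

lemma dx_v_div_dx_gamma_has_derivative:
  assumes t: "t \<in> {0<..<T}"
  shows "((\<lambda>y. dx (vfun f m \<gamma>) y t / dx \<gamma> y t) has_real_derivative fm_xx (\<gamma> x t) t * gamma_x x t) (at x)"
  using DERIV_chain2[OF fm_x_has_derivative gamma_has_derivative_x[OF t]] t
  by (simp add: dx_v_div_dx_gamma)

lemma dx_dx_v_div_dx_gamma:
  "t \<in> {0<..<T} \<Longrightarrow> dx (\<lambda>y s. dx (vfun f m \<gamma>) y s / dx \<gamma> y s) x t = fm_xx (\<gamma> x t) t * gamma_x x t"
  unfolding dx_def[of "\<lambda>y s. dx (vfun f m \<gamma>) y s / dx \<gamma> y s"]
  by (rule DERIV_imp_deriv[OF dx_v_div_dx_gamma_has_derivative])

lemma v_has_derivative_t: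
  assumes s: "s \<in> {0<..<T}"
  shows "((\<lambda>r. vfun f m \<gamma> x r) has_real_derivative
      deriv f (m (\<gamma> x s) s) * (m (\<gamma> x s) s * uxx (\<gamma> x s) s)) (at s)"
  unfolding vfun_def
  by (rule DERIV_chain2[OF f_has_derivative m_along_characteristic[OF s]]) (use m_pos s in auto)

lemma dt_v:
  "s \<in> {0<..<T} \<Longrightarrow> dt (vfun f m \<gamma>) x s = deriv f (m (\<gamma> x s) s) * (m (\<gamma> x s) s * uxx (\<gamma> x s) s)"
  unfolding dt_def by (rule DERIV_imp_deriv[OF v_has_derivative_t])

definition flux :: "real \<Rightarrow> real \<Rightarrow> real"
  where "flux x s = gamma_x x s * uxx (\<gamma> x s) s"

definition flux_t :: "real \<Rightarrow> real \<Rightarrow> real"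
  where "flux_t x t = gamma_x x t * (uxxx (\<gamma> x t) t * (- ux (\<gamma> x t) t) + uxxt (\<gamma> x t) t - (uxx (\<gamma> x t) t)\<^sup>2)"

lemma uxx_along_characteristic:
  assumes s: "s \<in> {0<..<T}"
  shows "((\<lambda>r. uxx (\<gamma> x r) r) has_real_derivative
      uxxx (\<gamma> x s) s * (- ux (\<gamma> x s) s) + uxxt (\<gamma> x s) s) (at s)"
  using C1_strip_along_curve[OF uxx _ gamma_has_derivative_t, of s x] at_within_interior[of s "{0..<T}"] s
  by (auto simp: interior_atLeastLessThan)

lemma flux_has_derivative:
  assumes t: "t \<in> {0<..<T}"
  shows "((\<lambda>s. flux x s) has_real_derivative flux_t x t) (at t)"
proof -
  have "m (\<gamma> x t) t > 0" using m_pos t by auto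
  then show ?thesis
    unfolding flux_def flux_t_def gamma_x_def
    by (auto intro!: derivative_eq_intros uxx_along_characteristic[OF t] m_along_characteristic[OF t]
        simp: field_simps power2_eq_square)
qed

lemma dt_eq_flux_t:
  assumes t: "t \<in> {0<..<T}" and K: "\<And>s. s \<in> {0<..<T} \<Longrightarrow> K x s = flux x s"
  shows "dt K x t = flux_t x t"
  unfolding dt_def
  by (rule DERIV_imp_deriv, rule has_field_derivative_transform_within_open[OF flux_has_derivative[OF t], of "{0<..<T}"])
     (use t K in auto)

lemma weighted_dt_v_eq_flux:
  assumes s: "s \<in> {0<..<T}"
  shows "(dx \<gamma> x s)\<^sup>2 / (m x 0 * deriv f (m x 0 / dx \<gamma> x s)) * dt (vfun f m \<gamma>) x s = flux x s"
proof -
  have m0: "m x 0 > 0" using m_initial_pos[OF s] .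
  have mu: "m (\<gamma> x s) s > 0" using m_pos s by auto
  have "m x 0 / dx \<gamma> x s = m (\<gamma> x s) s" using m0 mu by (simp add: dx_gamma[OF s] gamma_x_def)
  moreover have "deriv f (m (\<gamma> x s) s) > 0" using f'_pos mu by auto
  ultimately show ?thesis
    unfolding dt_v[OF s] dx_gamma[OF s] gamma_x_def flux_def
    using m0 mu by (simp add: field_simps power2_eq_square)
qed

lemma flux_t_eq:
  assumes t: "t \<in> {0<..<T}"
  shows "flux_t x t = - fm_xx (\<gamma> x t) t * gamma_x x t"
  unfolding fm_xx_def flux_t_def using utxx_eq_uxxt[OF t, of "\<gamma> x t"]
  by (simp add: algebra_simps power2_eq_square)

definition gamma_xx :: "real \<Rightarrow> real \<Rightarrow> real"
  where "gamma_xx x t = (mx x 0 - gamma_x x t * mx (\<gamma> x t) t * gamma_x x t) / m (\<gamma> x t) t"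

lemma gamma_x_has_derivative_x:
  assumes t: "t \<in> {0<..<T}"
  shows "((\<lambda>y. gamma_x y t) has_real_derivative gamma_xx x t) (at x)"
proof -
  have "m (\<gamma> x t) t > 0" using m_pos t by auto
  then show ?thesis
    using t unfolding gamma_xx_def gamma_x_def[abs_def]
    by (auto intro!: derivative_eq_intros C1_strip_x[OF m] DERIV_chain2[OF C1_strip_x[OF m] gamma_has_derivative_x[OF t]]
        simp: field_simps power2_eq_square gamma_x_def)
qed

lemma dx_dx_gamma: "t \<in> {0<..<T} \<Longrightarrow> dx (dx \<gamma>) x t = gamma_xx x t"
  by (simp add: dx_def[of "dx \<gamma>"] dx_gamma DERIV_imp_deriv[OF gamma_x_has_derivative_x])

lemma dx_dx_v:
  assumes t: "t \<in> {0<..<T}"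
  shows "dx (dx (vfun f m \<gamma>)) x t = fm_xx (\<gamma> x t) t * (gamma_x x t)\<^sup>2 + gamma_xx x t * fm_x (\<gamma> x t) t"
proof -
  have "((\<lambda>y. fm_x (\<gamma> y t) t * gamma_x y t) has_real_derivative
      fm_xx (\<gamma> x t) t * gamma_x x t * gamma_x x t + gamma_xx x t * fm_x (\<gamma> x t) t) (at x)"
    using t by (intro DERIV_mult DERIV_chain2[OF fm_x_has_derivative gamma_has_derivative_x] gamma_x_has_derivative_x)
       auto
  then show ?thesis
    using t by (simp add: dx_def[of "dx (vfun f m \<gamma>)"] dx_v DERIV_imp_deriv power2_eq_square)
qed

lemma divergence_form_equation:
  assumes t: "t \<in> {0<..<T}"
  shows "(\<lambda>y. dx (vfun f m \<gamma>) y t / dx \<gamma> y t) differentiable (at x) \<and>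
    (\<lambda>s. (dx \<gamma> x s)\<^sup>2 / (m x 0 * deriv f (m x 0 / dx \<gamma> x s)) * dt (vfun f m \<gamma>) x s) differentiable (at t) \<and>
    - dx (\<lambda>y s. dx (vfun f m \<gamma>) y s / dx \<gamma> y s) x t
    - dt (\<lambda>y s. (dx \<gamma> y s)\<^sup>2 / (m y 0 * deriv f (m y 0 / dx \<gamma> y s)) * dt (vfun f m \<gamma>) y s) x t = 0"
proof (intro conjI)
  show "(\<lambda>y. dx (vfun f m \<gamma>) y t / dx \<gamma> y t) differentiable (at x)"
    using dx_v_div_dx_gamma_has_derivative[OF t] real_differentiable_def by blast
  have "((\<lambda>s. (dx \<gamma> x s)\<^sup>2 / (m x 0 * deriv f (m x 0 / dx \<gamma> x s)) * dt (vfun f m \<gamma>) x s)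
      has_real_derivative flux_t x t) (at t)"
    by (rule has_field_derivative_transform_within_open[OF flux_has_derivative[OF t], of "{0<..<T}"])
       (use t weighted_dt_v_eq_flux in auto)
  then show "(\<lambda>s. (dx \<gamma> x s)\<^sup>2 / (m x 0 * deriv f (m x 0 / dx \<gamma> x s)) * dt (vfun f m \<gamma>) x s)
      differentiable (at t)"
    using real_differentiable_def by blast
  have "dt (\<lambda>y s. (dx \<gamma> y s)\<^sup>2 / (m y 0 * deriv f (m y 0 / dx \<gamma> y s)) * dt (vfun f m \<gamma>) y s) x t
      = flux_t x t"
    by (rule dt_eq_flux_t[OF t], rule weighted_dt_v_eq_flux)
  then show "- dx (\<lambda>y s. dx (vfun f m \<gamma>) y s / dx \<gamma> y s) x t
    - dt (\<lambda>y s. (dx \<gamma> y s)\<^sup>2 / (m y 0 * deriv f (m y 0 / dx \<gamma> y s)) * dt (vfun f m \<gamma>) y s) x t = 0"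
    using flux_t_eq[OF t] by (simp add: dx_dx_v_div_dx_gamma[OF t])
qed

lemma log_equation:
  assumes f_ln: "\<forall>s>0. f s = ln s" and t: "t \<in> {0<..<T}"
  shows "- dx (\<lambda>y s. dx (vfun f m \<gamma>) y s / dx \<gamma> y s) x t - dt (\<lambda>y s. dx \<gamma> y s * dt (vfun f m \<gamma>) y s) x t = 0"
proof -
  have deriv_f: "deriv f s = 1 / s" if "s > 0" for s
    using has_field_derivative_transform_within_open[OF DERIV_ln[OF that], of "{0<..}" f] that f_ln
    by (auto simp: DERIV_imp_deriv divide_inverse)
  have "dx \<gamma> x s * dt (vfun f m \<gamma>) x s = flux x s" if "s \<in> {0<..<T}" for s
  proof -
    have "m (\<gamma> x s) s > 0" using that m_pos by auto
    then show ?thesis using that by (simp add: dx_gamma dt_v deriv_f flux_def)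
  qed
  then have "dt (\<lambda>y s. dx \<gamma> y s * dt (vfun f m \<gamma>) y s) x t = flux_t x t" by (rule dt_eq_flux_t[OF t])
  then show ?thesis using flux_t_eq[OF t] by (simp add: dx_dx_v_div_dx_gamma[OF t])
qed

context
  fixes \<theta> :: real
  assumes \<theta>: "\<theta> > 0" and f_powr: "\<forall>s>0. f s = s powr \<theta>"
begin

lemma deriv_f_powr:
  assumes "s > 0"
  shows "deriv f s = \<theta> * s powr \<theta> / s"
proof -
  have "(f has_real_derivative \<theta> * s powr (\<theta> - 1)) (at s)"
    by (rule has_field_derivative_transform_within_open[OF has_real_derivative_powr[OF assms], of "{0<..}"])
       (use assms f_powr in auto)
  then show ?thesis using assms by (simp add: DERIV_imp_deriv powr_diff)
qed

lemma v_powr: "s \<in> {0<..<T} \<Longrightarrow> vfun f m \<gamma> y s = m (\<gamma> y s) s powr \<theta>"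
  using f_powr m_pos by (simp add: vfun_def)

lemma dt_v_powr: "s \<in> {0<..<T} \<Longrightarrow> dt (vfun f m \<gamma>) x s = \<theta> * m (\<gamma> x s) s powr \<theta> * uxx (\<gamma> x s) s"
  using m_pos by (simp add: dt_v deriv_f_powr)

lemma dt_dt_v_powr:
  assumes t: "t \<in> {0<..<T}"
  shows "dt (dt (vfun f m \<gamma>)) x t = \<theta> * m (\<gamma> x t) t powr \<theta>
    * (\<theta> * (uxx (\<gamma> x t) t)\<^sup>2 + (uxxx (\<gamma> x t) t * (- ux (\<gamma> x t) t) + uxxt (\<gamma> x t) t))"
proof -
  have "m (\<gamma> x t) t > 0" using m_pos t by auto
  then have "((\<lambda>s. \<theta> * m (\<gamma> x s) s powr \<theta> * uxx (\<gamma> x s) s) has_real_derivative \<theta> * m (\<gamma> x t) t powr \<theta>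
    * (\<theta> * (uxx (\<gamma> x t) t)\<^sup>2 + (uxxx (\<gamma> x t) t * (- ux (\<gamma> x t) t) + uxxt (\<gamma> x t) t))) (at t)"
    by (auto intro!: derivative_eq_intros m_along_characteristic[OF t] uxx_along_characteristic[OF t]
        simp: powr_diff field_simps power2_eq_square)
  then have "((\<lambda>s. dt (vfun f m \<gamma>) x s) has_real_derivative \<theta> * m (\<gamma> x t) t powr \<theta>
    * (\<theta> * (uxx (\<gamma> x t) t)\<^sup>2 + (uxxx (\<gamma> x t) t * (- ux (\<gamma> x t) t) + uxxt (\<gamma> x t) t))) (at t)"
    by (rule has_field_derivative_transform_within_open[of _ _ _ "{0<..<T}"]) (use t dt_v_powr in auto)
  then show ?thesis by (simp add: dt_def[of "dt (vfun f m \<gamma>)"] DERIV_imp_deriv)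
qed

lemma power_divergence_equation:
  assumes t: "t \<in> {0<..<T}"
  shows "- dx (\<lambda>y s. dx (vfun f m \<gamma>) y s / dx \<gamma> y s) x t
    - dt (\<lambda>y s. dx \<gamma> y s / (\<theta> * vfun f m \<gamma> y s) * dt (vfun f m \<gamma>) y s) x t = 0"
proof -
  have "dx \<gamma> x s / (\<theta> * vfun f m \<gamma> x s) * dt (vfun f m \<gamma>) x s = flux x s" if "s \<in> {0<..<T}" for s
  proof -
    have "m (\<gamma> x s) s > 0" using that m_pos by auto
    then show ?thesis using that \<theta> by (simp add: dx_gamma v_powr dt_v_powr flux_def)
  qed
  then have "dt (\<lambda>y s. dx \<gamma> y s / (\<theta> * vfun f m \<gamma> y s) * dt (vfun f m \<gamma>) y s) x t = flux_t x t"
    by (rule dt_eq_flux_t[OF t])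
  then show ?thesis using flux_t_eq[OF t] by (simp add: dx_dx_v_div_dx_gamma[OF t])
qed

lemma power_expanded_equation:
  assumes t: "t \<in> {0<..<T}"
  shows "- dt (dt (vfun f m \<gamma>)) x t
    - \<theta> * vfun f m \<gamma> x t / (dx \<gamma> x t)\<^sup>2 * dx (dx (vfun f m \<gamma>)) x t
    + dx (vfun f m \<gamma>) x t * \<theta> * vfun f m \<gamma> x t / (dx \<gamma> x t) ^ 3 * dx (dx \<gamma>) x t
    + (\<theta> + 1) / \<theta> * (dt (vfun f m \<gamma>) x t)\<^sup>2 / vfun f m \<gamma> x t = 0"
proof -
  define P where "P = m (\<gamma> x t) t powr \<theta>"
  define U where "U = uxx (\<gamma> x t) t"
  define U' where "U' = uxxx (\<gamma> x t) t * (- ux (\<gamma> x t) t) + uxxt (\<gamma> x t) t"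
  have U': "U' = U\<^sup>2 - fm_xx (\<gamma> x t) t"
    using utxx_eq_uxxt[OF t, of "\<gamma> x t"] by (simp add: U_def U'_def fm_xx_def)
  have "m (\<gamma> x t) t > 0" using m_pos t by auto
  then have "P > 0" by (simp add: P_def)
  moreover have "gamma_x x t > 0" using gamma_x_pos[OF t] .
  ultimately show ?thesis
    using \<theta>
    unfolding dt_dt_v_powr[OF t] dx_dx_v[OF t] dx_dx_gamma[OF t] dx_v[OF t] dx_gamma[OF t]
      dt_v_powr[OF t] v_powr[OF t] P_def[symmetric] U_def[symmetric] U'_def[symmetric]
    by (simp add: field_simps power2_eq_square power3_eq_cube) (simp add: U' algebra_simps power2_eq_square)
qed

end

end

theorem lemma3p5:
  fixes f :: "real \<Rightarrow> real" and u m \<gamma> :: "real \<Rightarrow> real \<Rightarrow> real" and T :: real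
  assumes f_C2: "C2_on {0<..} f"
    and f'_pos: "\<forall>s>0. deriv f s > 0"
    and u_C3: "Ck 3 u (UNIV \<times> {0..<T})"
    and m_C2: "Ck 2 m (UNIV \<times> {0..<T})"
    and HJ: "\<forall>x. \<forall>t\<in>{0<..<T}. - dt u x t + (dx u x t)\<^sup>2 / 2 = f (m x t)"
    and FP: "\<forall>x. \<forall>t\<in>{0<..<T}. dt m x t - dx (\<lambda>y s. m y s * dx u y s) x t = 0"
    and m_pos: "\<forall>x. \<forall>t\<in>{0<..<T}. m x t > 0"
    and ux_lin: "\<exists>C. \<forall>x. \<forall>t\<in>{0<..<T}. \<bar>dx u x t\<bar> \<le> C * (1 + \<bar>x\<bar>)"
    and gamma_0: "\<forall>x. \<gamma> x 0 = x"
    and gamma_ode: "\<forall>x. \<forall>t\<in>{0..<T}.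
          ((\<lambda>s. \<gamma> x s) has_real_derivative (- dx u (\<gamma> x t) t)) (at t within {0..<T})"
  shows
    "(\<forall>x. \<forall>t\<in>{0<..<T}.
        (\<lambda>y. dx (vfun f m \<gamma>) y t / dx \<gamma> y t) differentiable (at x) \<and>
        (\<lambda>s. (dx \<gamma> x s)\<^sup>2 / (m x 0 * deriv f (m x 0 / dx \<gamma> x s)) * dt (vfun f m \<gamma>) x s)
           differentiable (at t) \<and>
        - dx (\<lambda>y s. dx (vfun f m \<gamma>) y s / dx \<gamma> y s) x t
        - dt (\<lambda>y s. (dx \<gamma> y s)\<^sup>2 / (m y 0 * deriv f (m y 0 / dx \<gamma> y s)) * dt (vfun f m \<gamma>) y s) x t
        = 0)
   \<and> (\<forall>\<theta>>0. (\<forall>s>0. f s = s powr \<theta>) \<longrightarrow>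
        (\<forall>x. \<forall>t\<in>{0<..<T}.
          - dx (\<lambda>y s. dx (vfun f m \<gamma>) y s / dx \<gamma> y s) x t
          - dt (\<lambda>y s. dx \<gamma> y s / (\<theta> * vfun f m \<gamma> y s) * dt (vfun f m \<gamma>) y s) x t = 0
          \<and>
          - dt (dt (vfun f m \<gamma>)) x t
          - \<theta> * vfun f m \<gamma> x t / (dx \<gamma> x t)\<^sup>2 * dx (dx (vfun f m \<gamma>)) x t
          + dx (vfun f m \<gamma>) x t * \<theta> * vfun f m \<gamma> x t / (dx \<gamma> x t) ^ 3 * dx (dx \<gamma>) x t
          + (\<theta> + 1) / \<theta> * (dt (vfun f m \<gamma>) x t)\<^sup>2 / vfun f m \<gamma> x t = 0))
   \<and> ((\<forall>s>0. f s = ln s) \<longrightarrow>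
        (\<forall>x. \<forall>t\<in>{0<..<T}.
          - dx (\<lambda>y s. dx (vfun f m \<gamma>) y s / dx \<gamma> y s) x t
          - dt (\<lambda>y s. dx \<gamma> y s * dt (vfun f m \<gamma>) y s) x t = 0))"
proof -
  \<comment> \<open>\<open>ux_lin\<close> is only needed for the existence of \<open>\<gamma>\<close>, which is assumed here.\<close>
  let ?S = "UNIV \<times> {0..<T::real}"
  have "Ck (Suc (Suc (Suc 0))) u ?S" "Ck (Suc (Suc 0)) m ?S"
    using u_C3 m_C2 by (simp_all add: numeral_3_eq_3 numeral_2_eq_2)
  then obtain ux ut uxx uxt utx utt mx mt where
      u: "C1_strip T u ux ut" and m: "C1_strip T m mx mt"
    and ux: "C1_strip T ux uxx uxt" "Ck (Suc 0) uxx ?S" "Ck (Suc 0) uxt ?S"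
    and ut: "C1_strip T ut utx utt" "Ck (Suc 0) utx ?S"
    by (metis Ck_Suc_strip)
  obtain uxxx uxxt uxtx uxtt utxx utxt where
    "C1_strip T uxx uxxx uxxt" "C1_strip T uxt uxtx uxtt" "C1_strip T utx utxx utxt"
    using ux(2,3) ut(2) by (metis Ck_Suc_strip)
  then interpret mfg_system f u m \<gamma> T ux ut uxx uxt utx utt uxxx uxxt uxtx uxtt utxx utxt mx mt
    using f_C2 f'_pos HJ FP m_pos gamma_0 gamma_ode u m ux(1) ut(1) by unfold_locales
  show ?thesis
    using divergence_form_equation log_equation power_divergence_equation power_expanded_equation by blast
qed

end
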